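(* Let $n\ge 2$, let $W(r)=(1-r^2)^2$, and let $u\in C^2(\mathbb R^n,[-1,1])$ solve $\Delta u=W'(u)$ in $\mathbb R^n$, with $\partial u/\partial x_n>0$ in $\mathbb R^n$, and satisfying the energy bound: there is $C>0$ such that $\int_{B_R}\big(\tfrac12|\nabla u|^2+W(u)\big)\,dx\le CR^{n-1}$ for every $R>1$. Let $V\subseteq{\rm C}(d_o,h_o)$ be the (support of the) associated limit varifold, as described in the context. (a) If there exists $\overline x=(0,\dots,0,\overline x_n)$ with $\overline x_n\in(0,h_o)$ and $\overline x\notin V$, then $\lim_{x_n\to+\infty}u(x',x_n)=1$ for every $x'\in\mathbb R^{n-1}$. (b) If there exists $\underline x=(0,\dots,0,\underline x_n)$ with $\underline x_n\in(-h_o,0)$ and $\underline x\notin V$, then $\lim_{x_n\to-\infty}u(x',x_n)=-1$ for every $x'\in\mathbb R^{n-1}$.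
   Context: Points of $\mathbb R^n$ are written $x=(x',x_n)\in\mathbb R^{n-1}\times\mathbb R$. For $\varepsilon>0$ set $u_\varepsilon(x):=u(x/\varepsilon)$. For $d,h>0$, ${\rm C}(d,h):=\{x: |x'|<d,\ |x_n|<h\}$; the numbers $d_o,h_o>0$ are fixed. Limit varifold: under the energy bound, by Hutchinson–Tonegawa there is a sequence $\varepsilon_j\to0^+$ such that the Radon measures $\mu_j:=\big(\tfrac{\varepsilon_j}{2}|\nabla u_{\varepsilon_j}|^2+\tfrac1{\varepsilon_j}W(u_{\varepsilon_j})\big)dx$ converge weakly-* on ${\rm C}(d_o,h_o)$ to a Radon measure $\mu$, which is (a constant multiple of) the weight of a limit varifold; $V$ denotes its support $\operatorname{supp}\mu$, a relatively closed subset of ${\rm C}(d_o,h_o)$. Along this sequence (Hutchinson–Tonegawa): $u_{\varepsilon_j}\to\pm1$ uniformly on each connected compact subset of ${\rm C}(d_o,h_o)\setminus V$; and for every open $\tilde U\Subset{\rm C}(d_o,h_o)$, every $c\in(-1,1)$ and every $\delta>0$, for all sufficiently large $j$, $\{|u_{\varepsilon_j}|\le c\}\cap\tilde U\subseteq\bigcup_{p\in V}B_\delta(p)$. *)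

theory Defs
  imports "HOL-Analysis.Analysis"
begin

text \<open>Points of R^n are modelled as pairs (x', x_n) in 'm \<times> real, where 'm is a
Euclidean space of dimension n-1 \<ge> 1 (so n \<ge> 2 automatically).\<close>

definition W :: "real \<Rightarrow> real" where
  "W r = (1 - r\<^sup>2)\<^sup>2"

definition W' :: "real \<Rightarrow> real" where
  "W' r = - 4 * r * (1 - r\<^sup>2)"

definition pderiv_dir :: "('a::euclidean_space \<Rightarrow> real) \<Rightarrow> 'a \<Rightarrow> 'a \<Rightarrow> real" where
  "pderiv_dir f b x = frechet_derivative f (at x) b"

definition C2 :: "('a::euclidean_space \<Rightarrow> real) \<Rightarrow> bool" where
  "C2 f \<longleftrightarrow> (\<forall>x. f differentiable at x)
     \<and> (\<forall>b\<in>Basis. \<forall>x. (pderiv_dir f b) differentiable at x)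
     \<and> (\<forall>b\<in>Basis. \<forall>c\<in>Basis. continuous_on UNIV (pderiv_dir (pderiv_dir f b) c))"

definition laplacian :: "('a::euclidean_space \<Rightarrow> real) \<Rightarrow> 'a \<Rightarrow> real" where
  "laplacian f x = (\<Sum>b\<in>Basis. pderiv_dir (pderiv_dir f b) b x)"

definition grad_sq :: "('a::euclidean_space \<Rightarrow> real) \<Rightarrow> 'a \<Rightarrow> real" where
  "grad_sq f x = (\<Sum>b\<in>Basis. (pderiv_dir f b x)\<^sup>2)"

definition cyl :: "real \<Rightarrow> real \<Rightarrow> ('m::euclidean_space \<times> real) set" where
  "cyl d h = {x. norm (fst x) < d \<and> \<bar>snd x\<bar> < h}"

definition resc :: "real \<Rightarrow> ('a::real_vector \<Rightarrow> real) \<Rightarrow> 'a \<Rightarrow> real" where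
  "resc eps u x = u ((1 / eps) *\<^sub>R x)"

definition edens :: "real \<Rightarrow> ('a::euclidean_space \<Rightarrow> real) \<Rightarrow> 'a \<Rightarrow> real" where
  "edens eps u x = eps / 2 * grad_sq (resc eps u) x + W (resc eps u x) / eps"

definition csupp :: "('a::topological_space \<Rightarrow> real) \<Rightarrow> 'a set" where
  "csupp \<phi> = closure {x. \<phi> x \<noteq> 0}"

definition radon_on :: "('a::euclidean_space) set \<Rightarrow> 'a measure \<Rightarrow> bool" where
  "radon_on U \<mu> \<longleftrightarrow> sets \<mu> = sets borel \<and> emeasure \<mu> (UNIV - U) = 0
     \<and> (\<forall>K. compact K \<and> K \<subseteq> U \<longrightarrow> emeasure \<mu> K < \<infinity>)"

definition weak_star_conv_on ::
  "('a::euclidean_space) set \<Rightarrow> (nat \<Rightarrow> 'a \<Rightarrow> real) \<Rightarrow> 'a measure \<Rightarrow> bool" where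
  "weak_star_conv_on U e \<mu> \<longleftrightarrow>
     (\<forall>\<phi>. continuous_on UNIV \<phi> \<and> compact (csupp \<phi>) \<and> csupp \<phi> \<subseteq> U \<longrightarrow>
        ((\<lambda>j. integral U (\<lambda>x. \<phi> x * e j x)) \<longlongrightarrow> integral\<^sup>L \<mu> \<phi>) sequentially)"

definition msupp_in :: "('a::euclidean_space) set \<Rightarrow> 'a measure \<Rightarrow> 'a set" where
  "msupp_in U \<mu> = {p \<in> U. \<forall>r>0. emeasure \<mu> (ball p r \<inter> U) > 0}"

end

theory Submission
  imports Defs
begin

text \<open>Since \<open>(0, t) \<notin> V\<close> and \<open>V\<close> is relatively closed, a closed ball \<open>B\<close> around \<open>(0, t)\<close>
  lies in the cylinder and misses \<open>V\<close>, so by Hutchinson--Tonegawa \<open>u\<^sub>\<epsilon>\<^sub>j \<rightarrow> s \<in> {-1, 1}\<close>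
  uniformly on \<open>B\<close>. For fixed \<open>x'\<close> the points \<open>(\<epsilon>\<^sub>j x', t)\<close> eventually lie in \<open>B\<close>, hence
  \<open>u(x', t/\<epsilon>\<^sub>j) \<rightarrow> s\<close>, and \<open>t/\<epsilon>\<^sub>j \<rightarrow> \<plusminus>\<infinity>\<close> with the sign of \<open>t\<close>. Along the vertical line
  through \<open>x'\<close> the function \<open>u\<close> is strictly increasing with values in \<open>[-1, 1]\<close>, so the
  sequential limit is its limit at \<open>\<plusminus>\<infinity>\<close>, and strict monotonicity excludes the wrong
  sign of \<open>s\<close>.\<close>

lemma has_real_derivative_vertical_line:
  fixes u :: "'m::euclidean_space \<times> real \<Rightarrow> real"
  assumes "u differentiable at (x', t)"
  shows "((\<lambda>s. u (x', s)) has_real_derivative pderiv_dir u (0, 1) (x', t)) (at t)"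
proof -
  let ?D = "frechet_derivative u (at (x', t))"
  have du: "(u has_derivative ?D) (at (x', t))"
    using assms frechet_derivative_works by blast
  have "((\<lambda>s. (x', s)) has_derivative (\<lambda>h. (0, h))) (at t)"
    by (auto intro!: derivative_eq_intros)
  from has_derivative_compose[OF this du]
  have "((\<lambda>s. u (x', s)) has_derivative (\<lambda>h. ?D (0, h))) (at t)" .
  moreover have "(\<lambda>h. ?D (0, h)) = (\<lambda>h. ?D (0, 1) * h)"
  proof
    fix h :: real
    have "(0::'m, h) = h *\<^sub>R (0, 1)"
      by simp
    then show "?D (0, h) = ?D (0, 1) * h"
      using linear_scale[OF has_derivative_linear[OF du]] by (metis mult.commute real_scaleR_def)
  qed
  ultimately show ?thesis
    unfolding has_field_derivative_def pderiv_dir_def by simp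
qed

lemma strict_mono_vertical_line:
  fixes u :: "'m::euclidean_space \<times> real \<Rightarrow> real"
  assumes "\<forall>x. u differentiable at x" and "\<forall>x. pderiv_dir u (0, 1) x > 0"
  shows "strict_mono (\<lambda>s. u (x', s))"
proof (rule strict_monoI)
  fix a b :: real
  assume "a < b"
  show "u (x', a) < u (x', b)"
  proof (rule DERIV_pos_imp_increasing[OF \<open>a < b\<close>])
    fix s
    show "\<exists>y. ((\<lambda>s. u (x', s)) has_real_derivative y) (at s) \<and> y > 0"
      using assms has_real_derivative_vertical_line by blast
  qed
qed

lemma open_cyl: "open (cyl d h :: ('m::euclidean_space \<times> real) set)"
  unfolding cyl_def by (intro open_Collect_conj open_Collect_less continuous_intros)

lemma cball_in_complement_msupp_in:
  assumes "open U" and "sets \<mu> = sets borel" and "p \<in> U" and "p \<notin> msupp_in U \<mu>"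
  obtains r where "r > 0" and "cball p r \<subseteq> U - msupp_in U \<mu>"
proof -
  obtain r where r: "r > 0" and null: "emeasure \<mu> (ball p r \<inter> U) = 0"
    using assms(3,4) unfolding msupp_in_def by (auto simp: not_gr_zero)
  obtain r1 where r1: "r1 > 0" "cball p r1 \<subseteq> U"
    using assms(1,3) open_contains_cball by blast
  define r2 where "r2 = min r1 (r / 2)"
  have "q \<notin> msupp_in U \<mu>" if q: "q \<in> cball p r2" for q
  proof -
    have "dist p z < r" if "dist q z < r / 2" for z
      using q that dist_triangle[of p z q] by (simp add: r2_def)
    then have "ball q (r / 2) \<inter> U \<subseteq> ball p r \<inter> U"
      by auto
    moreover have "ball p r \<inter> U \<in> sets \<mu>"
      using assms(1,2) by auto
    ultimately have "emeasure \<mu> (ball q (r / 2) \<inter> U) = 0"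
      using emeasure_mono null by (metis le_zero_eq)
    then show ?thesis
      using \<open>r > 0\<close> unfolding msupp_in_def by (auto intro!: exI[of _ "r / 2"])
  qed
  moreover have "cball p r2 \<subseteq> U"
    using r1 by (auto simp: r2_def)
  ultimately show thesis
    using that[of r2] r r1 by (force simp: r2_def)
qed

lemma tendsto_vertical_line_of_uniform_resc:
  fixes u :: "'m::real_normed_vector \<times> real \<Rightarrow> real"
  assumes eps_pos: "\<forall>j. eps j > 0" and eps_lim: "eps \<longlonglongrightarrow> 0" and "r > 0"
    and unif: "\<forall>e>0. \<forall>\<^sub>F j in sequentially. \<forall>x\<in>cball (0, t) r. \<bar>resc (eps j) u x - s\<bar> < e"
  shows "(\<lambda>j. u (x', t / eps j)) \<longlonglongrightarrow> s"
proof (rule tendstoI)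
  fix e :: real
  assume "e > 0"
  have "(\<lambda>j. eps j * norm x') \<longlonglongrightarrow> 0"
    by (rule tendsto_mult_left_zero[OF eps_lim])
  then have "\<forall>\<^sub>F j in sequentially. eps j * norm x' < r"
    using \<open>r > 0\<close> by (auto dest: order_tendstoD(2))
  moreover have "\<forall>\<^sub>F j in sequentially. \<forall>x\<in>cball (0, t) r. \<bar>resc (eps j) u x - s\<bar> < e"
    using unif \<open>e > 0\<close> by blast
  ultimately show "\<forall>\<^sub>F j in sequentially. dist (u (x', t / eps j)) s < e"
  proof eventually_elim
    case (elim j)
    have "(eps j *\<^sub>R x', t) \<in> cball (0, t) r"
      using elim(1) eps_pos[rule_format, of j] by (simp add: dist_Pair_Pair dist_norm)
    moreover have "resc (eps j) u (eps j *\<^sub>R x', t) = u (x', t / eps j)"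
      using eps_pos[rule_format, of j] by (simp add: resc_def)
    ultimately show ?case
      using elim(2) by (force simp: dist_real_def)
  qed
qed

lemma tendsto_vertical_line_off_msupp_in:
  fixes u :: "'m::euclidean_space \<times> real \<Rightarrow> real"
  assumes "open U" and "sets \<mu> = sets borel"
    and eps_pos: "\<forall>j. eps j > 0" and eps_lim: "eps \<longlonglongrightarrow> 0"
    and HT1: "\<forall>K. compact K \<and> connected K \<and> K \<subseteq> U - msupp_in U \<mu> \<longrightarrow>
               (\<exists>s\<in>{-1, 1::real}. \<forall>e>0. \<forall>\<^sub>F j in sequentially.
                   \<forall>x\<in>K. \<bar>resc (eps j) u x - s\<bar> < e)"
    and "(0, t) \<in> U" and "(0, t) \<notin> msupp_in U \<mu>"
  obtains s where "s \<in> {-1, 1}" and "\<forall>x'. (\<lambda>j. u (x', t / eps j)) \<longlonglongrightarrow> s"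
proof -
  obtain r where "r > 0" and "cball (0, t) r \<subseteq> U - msupp_in U \<mu>"
    using cball_in_complement_msupp_in assms(1,2,6,7) by blast
  then obtain s where "s \<in> {-1, 1}"
    and "\<forall>e>0. \<forall>\<^sub>F j in sequentially. \<forall>x\<in>cball (0, t) r. \<bar>resc (eps j) u x - s\<bar> < e"
    using HT1 by (meson compact_cball connected_cball)
  with eps_pos eps_lim \<open>r > 0\<close> show thesis
    using that tendsto_vertical_line_of_uniform_resc by blast
qed

lemma filterlim_divide_at_top_of_tendsto_0:
  fixes eps :: "nat \<Rightarrow> real"
  assumes "\<forall>j. eps j > 0" and "eps \<longlonglongrightarrow> 0" and "t > 0"
  shows "filterlim (\<lambda>j. t / eps j) at_top sequentially"
proof -
  have "filterlim eps (at_right 0) sequentially"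
    using assms(1,2) by (intro tendsto_imp_filterlim_at_right) auto
  then have "filterlim (\<lambda>j. inverse (eps j)) at_top sequentially"
    using filterlim_inverse_at_top_right filterlim_compose by blast
  from filterlim_tendsto_pos_mult_at_top[OF tendsto_const \<open>t > 0\<close> this]
  show ?thesis
    by (simp add: divide_inverse)
qed

lemma filterlim_divide_at_bot_of_tendsto_0:
  fixes eps :: "nat \<Rightarrow> real"
  assumes "\<forall>j. eps j > 0" and "eps \<longlonglongrightarrow> 0" and "t < 0"
  shows "filterlim (\<lambda>j. t / eps j) at_bot sequentially"
  using filterlim_divide_at_top_of_tendsto_0[OF assms(1,2), of "- t"] \<open>t < 0\<close>
  by (simp add: filterlim_uminus_at_bot)

lemma tendsto_at_top_of_mono_sequence:
  fixes g :: "real \<Rightarrow> real"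
  assumes "mono g" and y: "filterlim y at_top sequentially" and lim: "(\<lambda>j. g (y j)) \<longlonglongrightarrow> L"
  shows "(g \<longlongrightarrow> L) at_top"
proof (rule order_tendstoI)
  fix a
  assume "a < L"
  with lim have "\<forall>\<^sub>F j in sequentially. a < g (y j)"
    by (rule order_tendstoD(1))
  then obtain j where "a < g (y j)"
    by (auto simp: eventually_sequentially)
  moreover have "g (y j) \<le> g x" if "y j \<le> x" for x
    using \<open>mono g\<close> that by (rule monoD)
  ultimately show "\<forall>\<^sub>F x in at_top. a < g x"
    unfolding eventually_at_top_linorder by (auto intro: order_less_le_trans)
next
  fix b
  assume "L < b"
  have "g x \<le> L" for x
  proof (rule tendsto_lowerbound[OF lim _ sequentially_bot])
    have "\<forall>\<^sub>F j in sequentially. x \<le> y j"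
      using y unfolding filterlim_at_top by blast
    then show "\<forall>\<^sub>F j in sequentially. g x \<le> g (y j)"
      by eventually_elim (rule monoD[OF \<open>mono g\<close>])
  qed
  then show "\<forall>\<^sub>F x in at_top. g x < b"
    using \<open>L < b\<close> by (intro always_eventually allI) (rule order_le_less_trans)
qed

lemma strict_mono_less_tendsto_at_top:
  fixes g :: "real \<Rightarrow> real"
  assumes "strict_mono g" and "(g \<longlongrightarrow> L) at_top"
  shows "g x < L"
proof -
  have "\<forall>\<^sub>F z in at_top. g (x + 1) \<le> g z"
    unfolding eventually_at_top_linorder using monoD[OF strict_mono_mono[OF assms(1)]] by blast
  then have "g (x + 1) \<le> L"
    using assms(2) by (intro tendsto_lowerbound) auto
  moreover have "g x < g (x + 1)"
    using assms(1) by (simp add: strict_monoD)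
  ultimately show ?thesis
    by simp
qed

lemma strict_mono_tendsto_1_at_top:
  fixes g :: "real \<Rightarrow> real"
  assumes "strict_mono g" and "\<forall>x. -1 \<le> g x" and "filterlim y at_top sequentially"
    and "(\<lambda>j. g (y j)) \<longlonglongrightarrow> s" and "s \<in> {-1, 1}"
  shows "(g \<longlongrightarrow> 1) at_top"
proof -
  have lim: "(g \<longlongrightarrow> s) at_top"
    using strict_mono_mono[OF assms(1)] assms(3,4) by (rule tendsto_at_top_of_mono_sequence)
  have "-1 < s"
    using assms(2) strict_mono_less_tendsto_at_top[OF assms(1) lim, of 0] by (meson order_le_less_trans)
  with lim assms(5) show ?thesis
    by auto
qed

lemma strict_mono_tendsto_minus_1_at_bot:
  fixes g :: "real \<Rightarrow> real"
  assumes "strict_mono g" and "\<forall>x. g x \<le> 1" and "filterlim y at_bot sequentially"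
    and "(\<lambda>j. g (y j)) \<longlonglongrightarrow> s" and "s \<in> {-1, 1}"
  shows "(g \<longlongrightarrow> -1) at_bot"
proof -
  have "strict_mono (\<lambda>x. - g (- x))"
    using strict_monoD[OF assms(1)] by (intro strict_monoI) simp
  moreover have "\<forall>x. -1 \<le> - g (- x)"
    using assms(2) by simp
  moreover have "filterlim (\<lambda>j. - y j) at_top sequentially"
    using assms(3) by (simp add: filterlim_uminus_at_top)
  moreover have "(\<lambda>j. - g (- (- y j))) \<longlonglongrightarrow> - s"
    using assms(4) by (simp add: tendsto_minus)
  moreover have "- s \<in> {-1, 1}"
    using assms(5) by auto
  ultimately have "((\<lambda>x. - g (- x)) \<longlongrightarrow> 1) at_top"
    by (rule strict_mono_tendsto_1_at_top)
  then show ?thesis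
    unfolding filterlim_at_bot_mirror by (simp add: tendsto_minus_cancel_left)
qed

theorem lemma3p1:
  fixes u :: "'m::euclidean_space \<times> real \<Rightarrow> real"
    and d\<^sub>o h\<^sub>o :: real
    and eps :: "nat \<Rightarrow> real"
    and \<mu> :: "('m \<times> real) measure"
    and V :: "('m \<times> real) set"
  assumes dh: "d\<^sub>o > 0" "h\<^sub>o > 0"
    and C2u: "C2 u"
    and range: "\<forall>x. u x \<in> {-1..1}"
    and pde: "\<forall>x. laplacian u x = W' (u x)"
    and mono: "\<forall>x. pderiv_dir u (0, 1) x > 0"
    and energy: "\<exists>C>0. \<forall>R>1. integral (ball 0 R) (\<lambda>x. grad_sq u x / 2 + W (u x))
                              \<le> C * R ^ (DIM('m \<times> real) - 1)"
    and eps_pos: "\<forall>j. eps j > 0"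
    and eps_lim: "eps \<longlonglongrightarrow> 0"
    and radon: "radon_on (cyl d\<^sub>o h\<^sub>o) \<mu>"
    and conv: "weak_star_conv_on (cyl d\<^sub>o h\<^sub>o) (\<lambda>j. edens (eps j) u) \<mu>"
    and V_def: "V = msupp_in (cyl d\<^sub>o h\<^sub>o) \<mu>"
    and HT1: "\<forall>K. compact K \<and> connected K \<and> K \<subseteq> cyl d\<^sub>o h\<^sub>o - V \<longrightarrow>
               (\<exists>s\<in>{-1, 1::real}. \<forall>e>0. \<forall>\<^sub>F j in sequentially.
                   \<forall>x\<in>K. \<bar>resc (eps j) u x - s\<bar> < e)"
    and HT2: "\<forall>U c \<delta>. open U \<and> compact (closure U) \<and> closure U \<subseteq> cyl d\<^sub>o h\<^sub>o
               \<and> -1 < c \<and> c < 1 \<and> \<delta> > 0 \<longrightarrow>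
               (\<forall>\<^sub>F j in sequentially.
                  {x \<in> U. \<bar>resc (eps j) u x\<bar> \<le> c} \<subseteq> (\<Union>p\<in>V. ball p \<delta>))"
  shows "((\<exists>t. 0 < t \<and> t < h\<^sub>o \<and> (0, t) \<notin> V) \<longrightarrow>
            (\<forall>x'. ((\<lambda>t. u (x', t)) \<longlongrightarrow> 1) at_top))
       \<and> ((\<exists>t. - h\<^sub>o < t \<and> t < 0 \<and> (0, t) \<notin> V) \<longrightarrow>
            (\<forall>x'. ((\<lambda>t. u (x', t)) \<longlongrightarrow> -1) at_bot))"
proof -
  have "\<forall>x. u differentiable at x"
    using C2u unfolding C2_def by blast
  then have sm: "strict_mono (\<lambda>s. u (x', s))" for x'
    using mono by (rule strict_mono_vertical_line)
  have bounds: "\<forall>t. -1 \<le> u (x', t)" "\<forall>t. u (x', t) \<le> 1" for x'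
    using range by auto
  have off_V: "\<exists>s\<in>{-1, 1}. \<forall>x'. (\<lambda>j. u (x', t / eps j)) \<longlonglongrightarrow> s"
    if "\<bar>t\<bar> < h\<^sub>o" and "(0, t) \<notin> V" for t
  proof -
    have "sets \<mu> = sets borel" and "(0, t) \<in> cyl d\<^sub>o h\<^sub>o"
      using radon that(1) dh by (simp_all add: radon_on_def cyl_def)
    from tendsto_vertical_line_off_msupp_in[OF open_cyl this(1) eps_pos eps_lim
        HT1[unfolded V_def] this(2) that(2)[unfolded V_def]]
    show ?thesis
      by blast
  qed
  show ?thesis
  proof (intro conjI impI allI)
    fix x'
    assume "\<exists>t. 0 < t \<and> t < h\<^sub>o \<and> (0, t) \<notin> V"
    then obtain t s where "0 < t" and "s \<in> {-1, 1}" and "(\<lambda>j. u (x', t / eps j)) \<longlonglongrightarrow> s"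
      using off_V by (metis abs_of_pos)
    with filterlim_divide_at_top_of_tendsto_0[OF eps_pos eps_lim]
    show "((\<lambda>t. u (x', t)) \<longlongrightarrow> 1) at_top"
      using strict_mono_tendsto_1_at_top[OF sm bounds(1)] by blast
  next
    fix x'
    assume "\<exists>t. - h\<^sub>o < t \<and> t < 0 \<and> (0, t) \<notin> V"
    then obtain t s where "t < 0" and "s \<in> {-1, 1}" and "(\<lambda>j. u (x', t / eps j)) \<longlonglongrightarrow> s"
      using off_V by (metis abs_of_neg minus_less_iff)
    with filterlim_divide_at_bot_of_tendsto_0[OF eps_pos eps_lim]
    show "((\<lambda>t. u (x', t)) \<longlongrightarrow> -1) at_bot"
      using strict_mono_tendsto_minus_1_at_bot[OF sm bounds(2)] by blast
  qed
qed

end
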